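(* Let $\epsilon\in\{1,-1\}$. Let $X,Y,Z\in\mathbb{Z}[i]$ satisfy $X^2+Y^2=\epsilon iZ^2$, $\gcd(X,Y,Z)\in U$, $XYZ\neq0$, where $X,Y\in O^I$ and $Z=(1+i)W$ with $W\in O^I$. Then there exist an integer $t$, $0\le t\le 3$, and $P,Q\in G$, both not divisible by $1+i$, with $\gcd(P,Q)=1$, such that $$X=i^{t+1}\frac{P^2+\epsilon(-1)^t iQ^2}{1+i},\quad Y=i^t\frac{P^2-\epsilon(-1)^t iQ^2}{1+i},\quad Z=(1+i)PQ.$$
   Context: $\mathbb{Z}[i]$ is the ring of Gaussian integers, $U=\{1,-1,i,-i\}$ its unit group; $R(\alpha),I(\alpha)$ are real and imaginary parts. $\gcd(\cdot)\in U$ means no common non-unit divisor; for $P,Q\in G$, $\gcd(P,Q)=1$ means no common prime factor. $O=\{\alpha: R(\alpha)+I(\alpha)\equiv1\pmod 2\}$, $O^I=\{\alpha\in O: R(\alpha)\equiv 1\pmod 4\}$. $G$ is the set of Gaussian integers $(1+i)^{a_1}p_2^{a_2}\cdots p_m^{a_m}$ with integers $a_j\ge0$ and $p_j$ distinct Gaussian primes in $O^I$. *)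

theory Defs
  imports Complex_Main
begin

definition gauss :: "complex \<Rightarrow> bool" where
  "gauss z \<longleftrightarrow> (\<exists>a b :: int. z = Complex (of_int a) (of_int b))"

definition gdvd :: "complex \<Rightarrow> complex \<Rightarrow> bool" (infix "gdvd" 50) where
  "a gdvd b \<longleftrightarrow> (\<exists>c. gauss c \<and> b = a * c)"

definition gunit :: "complex \<Rightarrow> bool" where
  "gunit u \<longleftrightarrow> u \<in> {1, -1, \<i>, -\<i>}"

definition gprime :: "complex \<Rightarrow> bool" where
  "gprime p \<longleftrightarrow> gauss p \<and> p \<noteq> 0 \<and> \<not> gunit p \<and>
     (\<forall>a b. gauss a \<longrightarrow> gauss b \<longrightarrow> p = a * b \<longrightarrow> gunit a \<or> gunit b)"

definition in_O :: "complex \<Rightarrow> bool" where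
  "in_O z \<longleftrightarrow> (\<exists>a b :: int. z = Complex (of_int a) (of_int b) \<and> odd (a + b))"

definition in_OI :: "complex \<Rightarrow> bool" where
  "in_OI z \<longleftrightarrow> (\<exists>a b :: int. z = Complex (of_int a) (of_int b) \<and> odd (a + b) \<and> a mod 4 = 1)"

definition in_G :: "complex \<Rightarrow> bool" where
  "in_G x \<longleftrightarrow> (\<exists>(k::nat) (S::complex set) (e::complex \<Rightarrow> nat).
      finite S \<and> (\<forall>p\<in>S. gprime p \<and> in_OI p) \<and> x = (1 + \<i>) ^ k * (\<Prod>p\<in>S. p ^ e p))"

end

theory Submission
  imports Defs
begin

(*
  Since X and Y lie in O^I, both X + iY and X - iY are (1+i) times Gaussian integers A and B,
  and A is prime to 1+i.  Dividing X^2 + Y^2 = eps i (1+i)^2 W^2 by (1+i)^2 gives AB = eps i W^2,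
  and the gcd condition makes A and B coprime.  Unique factorisation (from division with
  remainder for the norm) yields A = u P^2 and B = v Q^2 with units u, v, where P and Q can be
  chosen in O^I.  Squares of elements of O^I stay in O^I, and every Gaussian integer prime to 1+i
  has exactly one associate in O^I; hence W = PQ and uv = eps i.  Writing u = i^t, the
  formulas X = (1+i)(A+B)/2 and Y = (1+i)(A-B)/(2i) take the stated form.  Finally P, Q lie in G
  because every element of O^I is a product of primes from O^I.
*)

section \<open>Gaussian integers, norm and units\<close>

lemma gauss_iff: "gauss z \<longleftrightarrow> Re z \<in> \<int> \<and> Im z \<in> \<int>"
proof
  assume "Re z \<in> \<int> \<and> Im z \<in> \<int>"
  then obtain a b where "Re z = of_int a" "Im z = of_int b" by (auto elim!: Ints_cases)
  then show "gauss z" unfolding gauss_def by (metis complex.collapse)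
qed (auto simp: gauss_def)

lemma gaussE:
  assumes "gauss z"
  obtains a b :: int where "z = Complex (of_int a) (of_int b)"
  using assms unfolding gauss_def by blast

lemma gauss_add [intro]: "gauss a \<Longrightarrow> gauss b \<Longrightarrow> gauss (a + b)"
  and gauss_diff [intro]: "gauss a \<Longrightarrow> gauss b \<Longrightarrow> gauss (a - b)"
  and gauss_minus [intro]: "gauss a \<Longrightarrow> gauss (- a)"
  and gauss_mult [intro]: "gauss a \<Longrightarrow> gauss b \<Longrightarrow> gauss (a * b)"
  by (simp_all add: gauss_iff)

lemma gauss_0 [simp, intro]: "gauss 0"
  and gauss_1 [simp, intro]: "gauss 1"
  and gauss_imaginary_unit [simp, intro]: "gauss \<i>"
  and gauss_Complex_of_int [simp]: "gauss (Complex (of_int a) (of_int b))"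
  by (simp_all add: gauss_iff)

lemma gauss_power [intro]: "gauss a \<Longrightarrow> gauss (a ^ n)"
  by (induction n) auto

definition gnorm :: "complex \<Rightarrow> nat" where
  "gnorm z = nat (\<lfloor>Re z\<rfloor>\<^sup>2 + \<lfloor>Im z\<rfloor>\<^sup>2)"

lemma of_nat_gnorm: "gauss z \<Longrightarrow> real (gnorm z) = (cmod z)\<^sup>2"
  by (erule gaussE) (simp add: gnorm_def cmod_power2 add_nonneg_nonneg)

lemma gnorm_mult:
  assumes "gauss a" "gauss b"
  shows "gnorm (a * b) = gnorm a * gnorm b"
proof -
  have "real (gnorm (a * b)) = real (gnorm a * gnorm b)"
    using assms gauss_mult by (simp add: of_nat_gnorm norm_mult power_mult_distrib)
  then show ?thesis by (simp only: of_nat_eq_iff)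
qed

lemma gnorm_eq_0_iff:
  assumes "gauss z"
  shows "gnorm z = 0 \<longleftrightarrow> z = 0"
proof -
  have "gnorm z = 0 \<longleftrightarrow> real (gnorm z) = 0" by simp
  then show ?thesis using of_nat_gnorm [OF assms] by simp
qed

lemma sum_squares_eq_1_int:
  "(a::int)\<^sup>2 + b\<^sup>2 = 1 \<longleftrightarrow> (a = 1 \<or> a = -1) \<and> b = 0 \<or> a = 0 \<and> (b = 1 \<or> b = -1)"
proof
  assume sum: "a\<^sup>2 + b\<^sup>2 = 1"
  then have "a\<^sup>2 \<le> 1" "b\<^sup>2 \<le> 1" by (smt (verit) zero_le_power2)+
  then have "\<bar>a\<bar> \<le> 1" "\<bar>b\<bar> \<le> 1" by (simp_all add: abs_square_le_1)
  then have "a \<in> {-1, 0, 1}" "b \<in> {-1, 0, 1}" by auto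
  then show "(a = 1 \<or> a = -1) \<and> b = 0 \<or> a = 0 \<and> (b = 1 \<or> b = -1)"
    using sum by auto
qed auto

lemma gnorm_eq_1_iff:
  assumes "gauss z"
  shows "gnorm z = 1 \<longleftrightarrow> gunit z"
proof -
  obtain a b where z: "z = Complex (of_int a) (of_int b)" using assms by (rule gaussE)
  have "gnorm z = 1 \<longleftrightarrow> a\<^sup>2 + b\<^sup>2 = 1" unfolding gnorm_def z by auto
  then show ?thesis
    unfolding sum_squares_eq_1_int by (auto simp: gunit_def z complex_eq_iff)
qed

lemma gunit_cases:
  assumes "gunit u"
  obtains "u = 1" | "u = -1" | "u = \<i>" | "u = -\<i>"
  using assms unfolding gunit_def by blast

lemma gunit_gauss: "gunit u \<Longrightarrow> gauss u"
  and gunit_nonzero: "gunit u \<Longrightarrow> u \<noteq> 0"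
  and gunit_mult: "gunit u \<Longrightarrow> gunit v \<Longrightarrow> gunit (u * v)"
  and gunit_inverse: "gunit u \<Longrightarrow> gunit (1 / u)"
  by (auto simp: gunit_def field_simps)

lemma gunit_eq_power_imaginary_unit:
  assumes "gunit u"
  shows "\<exists>t \<le> 3. u = \<i> ^ t"
  using assms
proof (cases rule: gunit_cases)
  case 1 then show ?thesis by (intro exI [of _ 0]) simp
next
  case 2 then show ?thesis by (intro exI [of _ 2]) (simp add: power2_eq_square)
next
  case 3 then show ?thesis by (intro exI [of _ 1]) simp
next
  case 4 then show ?thesis by (intro exI [of _ 3]) (simp add: power3_eq_cube)
qed

lemma gdvd_refl [simp]: "a gdvd a"
  and gdvd_0 [simp]: "a gdvd 0"
  unfolding gdvd_def by (metis gauss_1 mult_1_right, metis gauss_0 mult_zero_right)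

lemma gdvd_trans: "a gdvd b \<Longrightarrow> b gdvd c \<Longrightarrow> a gdvd c"
  unfolding gdvd_def by (metis gauss_mult mult.assoc)

lemma gdvd_mult2: "a gdvd b \<Longrightarrow> gauss c \<Longrightarrow> a gdvd b * c"
  unfolding gdvd_def by (metis gauss_mult mult.assoc)

lemma gdvd_mult: "a gdvd b \<Longrightarrow> gauss c \<Longrightarrow> a gdvd c * b"
  using gdvd_mult2 by (metis mult.commute)

lemma gdvd_triv_left: "gauss c \<Longrightarrow> a gdvd a * c"
  unfolding gdvd_def by blast

lemma gdvd_mult_power2: "gauss u \<Longrightarrow> gauss a \<Longrightarrow> a gdvd u * a\<^sup>2"
  unfolding power2_eq_square by (intro gdvd_mult gdvd_triv_left)

lemma gdvd_add: "a gdvd b \<Longrightarrow> a gdvd c \<Longrightarrow> a gdvd b + c"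
  unfolding gdvd_def by (metis gauss_add distrib_left)

lemma gdvd_diff: "a gdvd b \<Longrightarrow> a gdvd c \<Longrightarrow> a gdvd b - c"
  unfolding gdvd_def by (metis gauss_diff right_diff_distrib)

lemma gdvd_mult_unit_iff:
  assumes "gunit u"
  shows "a gdvd u * b \<longleftrightarrow> a gdvd b"
proof
  assume "a gdvd u * b"
  then have "a gdvd (u * b) * (1 / u)"
    using gdvd_mult2 gunit_gauss gunit_inverse assms by blast
  then show "a gdvd b" using gunit_nonzero [OF assms] by simp
next
  assume "a gdvd b"
  then show "a gdvd u * b" using gdvd_mult gunit_gauss assms by blast
qed

section \<open>Primes and unique factorisation\<close>

lemma gprime_gauss: "gprime p \<Longrightarrow> gauss p"
  and gprime_nonzero: "gprime p \<Longrightarrow> p \<noteq> 0"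
  and gprime_not_gunit: "gprime p \<Longrightarrow> \<not> gunit p"
  unfolding gprime_def by blast+

lemma gnorm_gprime_gt_1:
  assumes "gprime p"
  shows "gnorm p > 1"
proof -
  have "gnorm p \<noteq> 0" "gnorm p \<noteq> 1"
    using assms gnorm_eq_0_iff gnorm_eq_1_iff gprime_gauss gprime_nonzero gprime_not_gunit by blast+
  then show ?thesis by linarith
qed

lemma gprime_unit_mult:
  assumes p: "gprime p" and u: "gunit u"
  shows "gprime (u * p)"
  unfolding gprime_def
proof (intro conjI allI impI)
  show "gauss (u * p)" using p u gprime_gauss gunit_gauss by blast
  show "u * p \<noteq> 0" using p u gprime_nonzero gunit_nonzero by simp
  show "\<not> gunit (u * p)"
  proof
    assume "gunit (u * p)"
    then have "gunit ((1 / u) * (u * p))" using gunit_mult gunit_inverse u by blast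
    then show False using p gprime_not_gunit gunit_nonzero [OF u] by simp
  qed
  fix a b assume ab: "gauss a" "gauss b" "u * p = a * b"
  then have "p = (a / u) * b" using gunit_nonzero [OF u] by (simp add: field_simps)
  moreover have "gauss (a / u)"
    using ab gunit_gauss [OF gunit_inverse [OF u]] gauss_mult by (metis divide_inverse inverse_eq_divide)
  ultimately have "gunit (a / u) \<or> gunit b" using p ab unfolding gprime_def by blast
  then show "gunit a \<or> gunit b"
  proof
    assume "gunit (a / u)"
    then have "gunit (u * (a / u))" using gunit_mult u by blast
    then show ?thesis using gunit_nonzero [OF u] by simp
  qed simp
qed

lemma gauss_division:
  assumes "gauss a" "gauss b" "b \<noteq> 0"
  obtains q where "gauss q" "gnorm (a - q * b) < gnorm b"
proof -
  define w where "w = a / b"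
  define q where "q = Complex (of_int (round (Re w))) (of_int (round (Im w)))"
  define e where "e = w - q"
  have "\<bar>Re e\<bar> \<le> 1/2" "\<bar>Im e\<bar> \<le> 1/2"
    unfolding e_def q_def using of_int_round_abs_le [of "Re w"] of_int_round_abs_le [of "Im w"]
    by (auto simp: abs_minus_commute)
  then have "(Re e)\<^sup>2 \<le> 1/4" "(Im e)\<^sup>2 \<le> 1/4"
    using power_mono [of "\<bar>Re e\<bar>" "1/2" 2] power_mono [of "\<bar>Im e\<bar>" "1/2" 2]
    by (simp_all add: power_divide)
  then have e: "(cmod e)\<^sup>2 < 1" unfolding cmod_power2 by simp
  have q: "gauss q" unfolding q_def by simp
  have r: "a - q * b = b * e" unfolding e_def w_def using assms(3) by (simp add: field_simps)
  have "gauss (a - q * b)" using assms q by blast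
  then have "real (gnorm (a - q * b)) = (cmod b)\<^sup>2 * (cmod e)\<^sup>2"
    by (simp add: of_nat_gnorm r norm_mult power_mult_distrib)
  also have "\<dots> < real (gnorm b)" using e assms by (simp add: of_nat_gnorm)
  finally show thesis using q that by simp
qed

lemma gauss_bezout:
  assumes "gauss a" "gauss b"
  shows "\<exists>d x y. gauss x \<and> gauss y \<and> d gdvd a \<and> d gdvd b \<and> d = x * a + y * b"
  using assms
proof (induction "gnorm b" arbitrary: a b rule: less_induct)
  case less
  show ?case
  proof (cases "b = 0")
    case True
    then show ?thesis by (intro exI [of _ a] exI [of _ 1] exI [of _ 0]) simp
  next
    case False
    then obtain q where q: "gauss q" "gnorm (a - q * b) < gnorm b"
      using gauss_division less.prems by blast
    moreover have "gauss (a - q * b)" using less.prems q(1) by blast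
    ultimately obtain d x y where d: "gauss x" "gauss y" "d gdvd b" "d gdvd a - q * b"
      "d = x * b + y * (a - q * b)"
      using less.hyps [OF q(2) less.prems(2)] by blast
    have "d gdvd (a - q * b) + b * q" using d(3,4) q(1) by (intro gdvd_add gdvd_mult2)
    then have "d gdvd a" by simp
    moreover have "d = y * a + (x - y * q) * b" unfolding d(5) by (simp add: algebra_simps)
    moreover have "gauss (x - y * q)" using d(1,2) q(1) by blast
    ultimately show ?thesis using d(2,3) by blast
  qed
qed

lemma gprime_gdvd_mult:
  assumes p: "gprime p" and ab: "gauss a" "gauss b" and dvd: "p gdvd a * b"
  shows "p gdvd a \<or> p gdvd b"
proof -
  obtain d x y where d: "gauss x" "gauss y" "d gdvd p" "d gdvd a" "d = x * p + y * a"
    using gauss_bezout [OF gprime_gauss [OF p] ab(1)] by blast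
  obtain c where c: "gauss c" "p = d * c" using d(3) unfolding gdvd_def by blast
  have "gauss d" unfolding d(5) using d(1,2) gprime_gauss [OF p] ab(1) by blast
  then have "gunit d \<or> gunit c" using p c unfolding gprime_def by blast
  then show ?thesis
  proof
    assume "gunit c"
    then have "p gdvd d" using c(2) gdvd_mult_unit_iff [of c p d] by (simp add: mult.commute)
    then show ?thesis using d(4) gdvd_trans by blast
  next
    assume "gunit d"
    have "p gdvd (x * b) * p" using d(1) ab(2) by (intro gdvd_mult gdvd_refl) blast
    moreover have "p gdvd y * (a * b)" using dvd d(2) by (rule gdvd_mult)
    ultimately have "p gdvd (x * b) * p + y * (a * b)" by (rule gdvd_add)
    also have "(x * b) * p + y * (a * b) = d * b" unfolding d(5) by (simp add: algebra_simps)
    finally show ?thesis using gdvd_mult_unit_iff \<open>gunit d\<close> by blast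
  qed
qed

lemma gprime_gdvd_power2: "gprime p \<Longrightarrow> gauss a \<Longrightarrow> p gdvd a\<^sup>2 \<Longrightarrow> p gdvd a"
  using gprime_gdvd_mult [of p a a] by (simp add: power2_eq_square)

lemma gprime_divisor_exists:
  assumes "gauss a" "a \<noteq> 0" "\<not> gunit a"
  shows "\<exists>p. gprime p \<and> p gdvd a"
  using assms
proof (induction "gnorm a" arbitrary: a rule: less_induct)
  case less
  show ?case
  proof (cases "gprime a")
    case False
    then obtain x y where xy: "gauss x" "gauss y" "a = x * y" "\<not> gunit x" "\<not> gunit y"
      using less.prems unfolding gprime_def by blast
    have "x \<noteq> 0" "y \<noteq> 0" using xy less.prems by auto
    then have "gnorm x \<noteq> 0" "gnorm y \<noteq> 0" "gnorm y \<noteq> 1"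
      using gnorm_eq_0_iff gnorm_eq_1_iff xy by blast+
    then have "gnorm x < gnorm a" using gnorm_mult xy by simp
    then obtain p where "gprime p" "p gdvd x" using less.hyps xy \<open>x \<noteq> 0\<close> by blast
    then show ?thesis using xy gdvd_mult2 by blast
  qed auto
qed

definition gcoprime :: "complex \<Rightarrow> complex \<Rightarrow> bool" where
  "gcoprime a b \<longleftrightarrow> (\<forall>p. gprime p \<longrightarrow> \<not> (p gdvd a \<and> p gdvd b))"

lemma gcoprime_commute: "gcoprime a b \<longleftrightarrow> gcoprime b a"
  unfolding gcoprime_def by blast

lemma gcoprime_gdvd_mono: "gcoprime a b \<Longrightarrow> c gdvd a \<Longrightarrow> d gdvd b \<Longrightarrow> gcoprime c d"
  unfolding gcoprime_def using gdvd_trans by blast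

text \<open>Descent on the norm: a prime factor \<open>p\<close> of \<open>A\<close> divides \<open>S\<close>, so \<open>p\<^sup>2\<close> divides \<open>A\<close>
  because \<open>p\<close> does not divide \<open>B\<close>.\<close>

lemma gcoprime_mult_eq_unit_square:
  assumes "gauss A" "gauss B" "gauss S" "gunit c" "A \<noteq> 0"
    and "gcoprime A B" and "A * B = c * S\<^sup>2"
  shows "\<exists>u P. gunit u \<and> gauss P \<and> A = u * P\<^sup>2"
  using assms
proof (induction "gnorm A" arbitrary: A S rule: less_induct)
  case less
  show ?case
  proof (cases "gunit A")
    case True
    then show ?thesis by (intro exI [of _ A] exI [of _ 1]) simp
  next
    case False
    obtain p where p: "gprime p" "p gdvd A"
      using gprime_divisor_exists less.prems False by blast
    have p0: "p \<noteq> 0" and pg: "gauss p" using p gprime_nonzero gprime_gauss by blast+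
    obtain A1 where A1: "gauss A1" "A = p * A1" using p(2) unfolding gdvd_def by blast
    have "p gdvd c * S\<^sup>2" using gdvd_mult2 [OF p(2) less.prems(2)] less.prems(7) by simp
    then have "p gdvd S\<^sup>2" using gdvd_mult_unit_iff [OF less.prems(4)] by blast
    then have "p gdvd S" using gprime_gdvd_power2 [OF p(1) less.prems(3)] by blast
    then obtain S1 where S1: "gauss S1" "S = p * S1" unfolding gdvd_def by blast
    have "p * (A1 * B) = p * (p * (c * S1\<^sup>2))"
      using less.prems(7) unfolding A1(2) S1(2) by (simp add: algebra_simps power2_eq_square)
    then have e1: "A1 * B = p * (c * S1\<^sup>2)" using p0 by simp
    have "\<not> p gdvd B" using less.prems(6) p unfolding gcoprime_def by blast
    moreover have "p gdvd A1 * B" unfolding e1 using S1 less.prems gunit_gauss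
      by (intro gdvd_triv_left) auto
    ultimately have "p gdvd A1" using gprime_gdvd_mult p A1 less.prems by blast
    then obtain A2 where A2: "gauss A2" "A1 = p * A2" unfolding gdvd_def by blast
    have A: "A = A2 * p\<^sup>2" unfolding A1(2) A2(2) by (simp add: algebra_simps power2_eq_square)
    have "A2 * B = c * S1\<^sup>2" using e1 p0 unfolding A2(2) by (simp add: algebra_simps)
    moreover have "A2 \<noteq> 0" using less.prems A by auto
    moreover have "gnorm A2 < gnorm A"
    proof -
      have "gnorm A = gnorm A2 * (gnorm p * gnorm p)"
        unfolding A power2_eq_square using gnorm_mult A2(1) pg by (simp add: gauss_mult)
      moreover have "gnorm p > 1" "gnorm A2 > 0"
        using gnorm_gprime_gt_1 [OF p(1)] gnorm_eq_0_iff [OF A2(1)] \<open>A2 \<noteq> 0\<close> by auto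
      ultimately show ?thesis by (simp add: less_le_trans)
    qed
    moreover have "gcoprime A2 B"
      using gcoprime_gdvd_mono [OF less.prems(6) _ gdvd_refl] A gdvd_triv_left pg by blast
    ultimately obtain u P where "gunit u" "gauss P" "A2 = u * P\<^sup>2"
      using less.hyps [OF _ A2(1) less.prems(2) S1(1) less.prems(4)] by blast
    then show ?thesis using pg A
      by (intro exI [of _ u] exI [of _ "p * P"]) (auto simp: algebra_simps power2_eq_square)
  qed
qed

section \<open>The normalised elements \<open>O\<^sup>I\<close>\<close>

lemma one_plus_i_gdvd_iff: "(1 + \<i>) gdvd Complex (of_int a) (of_int b) \<longleftrightarrow> even (a + b)"
proof
  assume "(1 + \<i>) gdvd Complex (of_int a) (of_int b)"
  then obtain c where c: "gauss c" "Complex (of_int a) (of_int b) = (1 + \<i>) * c"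
    unfolding gdvd_def by blast
  obtain x y where "c = Complex (of_int x) (of_int y)" using c(1) by (rule gaussE)
  with c(2) have "of_int a = (of_int (x - y) :: real)" "of_int b = (of_int (x + y) :: real)"
    by (simp_all add: complex_eq_iff)
  then have "a = x - y" "b = x + y" by (simp_all only: of_int_eq_iff)
  then show "even (a + b)" by simp
next
  assume "even (a + b)"
  then have "a = (a + b) div 2 - (b - a) div 2" "b = (a + b) div 2 + (b - a) div 2" by presburger+
  then have "Complex (of_int a) (of_int b) = (1 + \<i>) * Complex (of_int ((a + b) div 2)) (of_int ((b - a) div 2))"
    by (simp add: complex_eq_iff)
  then show "(1 + \<i>) gdvd Complex (of_int a) (of_int b)"
    unfolding gdvd_def using gauss_Complex_of_int by blast
qed

lemma in_OI_Complex_iff: "in_OI (Complex (of_int a) (of_int b)) \<longleftrightarrow> a mod 4 = 1 \<and> even b"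
  unfolding in_OI_def by simp presburger

lemma in_OI_iff: "in_OI z \<longleftrightarrow> (\<exists>k m :: int. z = Complex (of_int (4 * k + 1)) (of_int (2 * m)))"
proof
  assume "in_OI z"
  then obtain a b :: int where ab: "z = Complex (of_int a) (of_int b)" "a mod 4 = 1" "even b"
    unfolding in_OI_def by auto presburger
  then have "a = 4 * (a div 4) + 1" "b = 2 * (b div 2)" by presburger+
  then show "\<exists>k m :: int. z = Complex (of_int (4 * k + 1)) (of_int (2 * m))" using ab(1) by metis
next
  assume "\<exists>k m :: int. z = Complex (of_int (4 * k + 1)) (of_int (2 * m))"
  then obtain k m :: int where z: "z = Complex (of_int (4 * k + 1)) (of_int (2 * m))" by blast
  have "(4 * k + 1) mod 4 = 1" "even (2 * m)" by presburger+
  then show "in_OI z" unfolding z in_OI_Complex_iff by blast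
qed

lemma in_OI_gauss: "in_OI z \<Longrightarrow> gauss z"
  unfolding in_OI_def gauss_def by blast

lemma in_OI_not_gdvd: "in_OI z \<Longrightarrow> \<not> (1 + \<i>) gdvd z"
  unfolding in_OI_def using one_plus_i_gdvd_iff by blast

lemma in_OI_nonzero: "in_OI z \<Longrightarrow> z \<noteq> 0"
  using in_OI_not_gdvd gdvd_0 by blast

lemma in_OI_1: "in_OI 1"
  using in_OI_Complex_iff [of 1 0] by (simp add: one_complex.code)

lemma in_OI_mult:
  assumes "in_OI x" "in_OI y"
  shows "in_OI (x * y)"
proof -
  obtain k m l n where "x = Complex (of_int (4 * k + 1)) (of_int (2 * m))"
    "y = Complex (of_int (4 * l + 1)) (of_int (2 * n))"
    using assms in_OI_iff by meson
  then have "x * y = Complex (of_int (4 * (4 * k * l + k + l - m * n) + 1))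
      (of_int (2 * ((4 * k + 1) * n + m * (4 * l + 1))))"
    by (simp add: complex_eq_iff algebra_simps)
  then show ?thesis unfolding in_OI_iff by blast
qed

lemma in_OI_power: "in_OI x \<Longrightarrow> in_OI (x ^ n)"
  by (induction n) (simp_all add: in_OI_1 in_OI_mult)

lemma gunit_mult_Complex:
  "-1 * Complex (of_int a) (of_int b) = Complex (of_int (- a)) (of_int (- b))"
  "\<i> * Complex (of_int a) (of_int b) = Complex (of_int (- b)) (of_int a)"
  "-\<i> * Complex (of_int a) (of_int b) = Complex (of_int b) (of_int (- a))"
  by (simp_all add: complex_eq_iff)

lemma in_OI_associate_exists:
  assumes "gauss z" "\<not> (1 + \<i>) gdvd z"
  obtains s where "gunit s" "in_OI (s * z)"
proof -
  note result = that
  have *: thesis if "gunit s" "s * z = Complex (of_int c) (of_int d)" "c mod 4 = 1 \<and> even d"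
    for s c d
    using result [OF that(1)] that(2,3) in_OI_Complex_iff by metis
  obtain a b where z: "z = Complex (of_int a) (of_int b)" using assms(1) by (rule gaussE)
  have "odd (a + b)" using assms(2) one_plus_i_gdvd_iff unfolding z by blast
  then have "a mod 4 = 1 \<and> even b \<or> (- a) mod 4 = 1 \<and> even (- b) \<or>
      (- b) mod 4 = 1 \<and> even a \<or> b mod 4 = 1 \<and> even (- a)"
    by presburger
  then show thesis
    using * [of 1 a b] * [of "-1" "- a" "- b"] * [of \<i> "- b" a] * [of "-\<i>" b "- a"]
    unfolding gunit_def z gunit_mult_Complex by auto
qed

lemma in_OI_not_in_OI_unit_mult:
  assumes "in_OI z" "u \<in> {-1, \<i>, -\<i>}"
  shows "\<not> in_OI (u * z)"
proof -
  obtain a b where z: "z = Complex (of_int a) (of_int b)" "a mod 4 = 1"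
    using assms(1) unfolding in_OI_def by blast
  from z(2) assms(2) show ?thesis
    by (elim insertE emptyE; simp only: z(1) gunit_mult_Complex in_OI_Complex_iff; presburger)
qed

lemma in_OI_gunit_mult_eq_1: "in_OI z \<Longrightarrow> in_OI (u * z) \<Longrightarrow> gunit u \<Longrightarrow> u = 1"
  using in_OI_not_in_OI_unit_mult unfolding gunit_def by blast

lemma in_OI_uminus: "in_OI z \<Longrightarrow> \<not> in_OI (- z)"
  using in_OI_not_in_OI_unit_mult [of z "-1"] by simp

lemma in_OI_gprime_factor:
  assumes w: "in_OI w" and "\<not> gunit w"
  obtains p w' where "gprime p" "in_OI p" "in_OI w'" "w = p * w'"
proof -
  have wg: "gauss w" using in_OI_gauss w by blast
  obtain p0 where p0: "gprime p0" "p0 gdvd w"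
    using gprime_divisor_exists wg in_OI_nonzero [OF w] assms(2) by blast
  then have "\<not> (1 + \<i>) gdvd p0" using in_OI_not_gdvd [OF w] gdvd_trans by blast
  then obtain s where s: "gunit s" "in_OI (s * p0)"
    using in_OI_associate_exists gprime_gauss [OF p0(1)] by blast
  define p where "p = s * p0"
  have p: "gprime p" "in_OI p" unfolding p_def using gprime_unit_mult p0 s by blast+
  obtain k where k: "gauss k" "w = p0 * k" using p0(2) unfolding gdvd_def by blast
  define w' where "w' = k / s"
  have w'g: "gauss w'"
    unfolding w'_def using k(1) gunit_gauss [OF gunit_inverse [OF s(1)]] gauss_mult
    by (metis times_divide_eq_right mult_1_right)
  have ww': "w = p * w'" unfolding p_def w'_def k(2) using gunit_nonzero [OF s(1)] by simp
  then have "\<not> (1 + \<i>) gdvd w'" using in_OI_not_gdvd [OF w] gdvd_mult gprime_gauss p by metis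
  then obtain s' where s': "gunit s'" "in_OI (s' * w')" using in_OI_associate_exists w'g by blast
  \<comment> \<open>\<open>s'\<close> also normalises \<open>w = p * w'\<close>, which is already normalised\<close>
  have "in_OI (s' * w)" using in_OI_mult [OF p(2) s'(2)] unfolding ww' by (simp add: ac_simps)
  then have "s' = 1" using in_OI_gunit_mult_eq_1 w s'(1) by blast
  then show thesis using that p s' ww' by simp
qed

lemma in_G_1: "in_G 1"
  unfolding in_G_def by (intro exI [of _ 0] exI [of _ "{}"]) simp

lemma in_G_gprime_mult:
  assumes "in_G x" "gprime p" "in_OI p"
  shows "in_G (p * x)"
proof -
  obtain k S e where S: "finite S" "\<forall>q\<in>S. gprime q \<and> in_OI q"
    and x: "x = (1 + \<i>) ^ k * (\<Prod>q\<in>S. q ^ e q)"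
    using assms(1) unfolding in_G_def by blast
  define e' where "e' = e (p := (if p \<in> S then e p else 0) + 1)"
  have "(\<Prod>q\<in>insert p S. q ^ e' q) = p * (\<Prod>q\<in>S. q ^ e q)"
  proof (cases "p \<in> S")
    case True
    then have "(\<Prod>q\<in>S. q ^ e' q) = p ^ (e p + 1) * (\<Prod>q\<in>S - {p}. q ^ e q)"
      using S(1) by (simp add: prod.remove e'_def)
    moreover have "(\<Prod>q\<in>S. q ^ e q) = p ^ e p * (\<Prod>q\<in>S - {p}. q ^ e q)"
      using True S(1) by (simp add: prod.remove)
    ultimately show ?thesis using True by (simp add: insert_absorb)
  next
    case False
    then have "(\<Prod>q\<in>S. q ^ e' q) = (\<Prod>q\<in>S. q ^ e q)"
      unfolding e'_def by (intro prod.cong) auto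
    then show ?thesis using False S(1) by (simp add: e'_def)
  qed
  then have "p * x = (1 + \<i>) ^ k * (\<Prod>q\<in>insert p S. q ^ e' q)" unfolding x by (simp add: ac_simps)
  then show ?thesis unfolding in_G_def using S assms(2,3) by blast
qed

lemma in_OI_imp_in_G: "in_OI w \<Longrightarrow> in_G w"
proof (induction "gnorm w" arbitrary: w rule: less_induct)
  case less
  show ?case
  proof (cases "gunit w")
    case True
    then have "w = 1" using in_OI_gunit_mult_eq_1 [of 1 w] less.prems in_OI_1 by simp
    then show ?thesis using in_G_1 by simp
  next
    case False
    then obtain p w' where p: "gprime p" "in_OI p" and w': "in_OI w'" "w = p * w'"
      using in_OI_gprime_factor less.prems by blast
    have "gauss p" "gauss w'" using p w' gprime_gauss in_OI_gauss by blast+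
    then have "gnorm w = gnorm p * gnorm w'" "gnorm w' \<noteq> 0"
      using gnorm_mult gnorm_eq_0_iff in_OI_nonzero w' by auto
    then have "gnorm w' < gnorm w" using gnorm_gprime_gt_1 [OF p(1)] by simp
    then show ?thesis using less.hyps w' in_G_gprime_mult p by blast
  qed
qed

lemma one_plus_i_gdvd_gprime_divisor:
  assumes p: "gprime p" "p gdvd 1 + \<i>"
  shows "(1 + \<i>) gdvd p"
proof -
  obtain c where c: "gauss c" "1 + \<i> = p * c" using p(2) unfolding gdvd_def by blast
  have "gnorm (1 + \<i>) = 2" by (simp add: gnorm_def)
  then have "gnorm p * gnorm c = 2"
    using gnorm_mult [OF gprime_gauss [OF p(1)] c(1)] c(2) by simp
  moreover have "2 * gnorm c \<le> gnorm p * gnorm c"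
    using gnorm_gprime_gt_1 [OF p(1)] by simp
  ultimately have "gnorm c = 1" by (cases "gnorm c") auto
  then have u: "gunit c" using gnorm_eq_1_iff c(1) by blast
  have "p = (1 + \<i>) * (1 / c)" using c(2) gunit_nonzero [OF u] by (simp add: field_simps)
  then show ?thesis unfolding gdvd_def using gunit_gauss [OF gunit_inverse [OF u]] by blast
qed

lemma gprime_gdvd_one_plus_i_mult_cancel:
  assumes p: "gprime p" "p gdvd (1 + \<i>) * t" and t: "gauss t"
    and A: "p gdvd A" "\<not> (1 + \<i>) gdvd A"
  shows "p gdvd t"
proof -
  have "\<not> p gdvd 1 + \<i>" using one_plus_i_gdvd_gprime_divisor p(1) A gdvd_trans by blast
  moreover have "gauss (1 + \<i>)" by blast
  ultimately show ?thesis using gprime_gdvd_mult [OF p(1) _ t p(2)] by blast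
qed

lemma gcoprime_mult_eq_unit_OI_square:
  assumes "gauss A" "gauss B" "gunit c" "in_OI W" "gcoprime A B" "A * B = c * W\<^sup>2"
  obtains u P where "gunit u" "in_OI P" "A = u * P\<^sup>2"
proof -
  have "c * W\<^sup>2 \<noteq> 0" using gunit_nonzero [OF assms(3)] in_OI_nonzero [OF assms(4)] by simp
  then have "A \<noteq> 0" using assms(6) by auto
  then obtain u0 P0 where u0: "gunit u0" "gauss P0" "A = u0 * P0\<^sup>2"
    using gcoprime_mult_eq_unit_square [OF assms(1,2) in_OI_gauss [OF assms(4)] assms(3) _ assms(5,6)]
    by blast
  have "\<not> (1 + \<i>) gdvd P0"
  proof
    assume "(1 + \<i>) gdvd P0"
    moreover have "P0 gdvd A" unfolding u0(3) using gdvd_mult_power2 gunit_gauss u0(1,2) by blast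
    ultimately have "(1 + \<i>) gdvd A * B" using gdvd_trans gdvd_mult2 assms(2) by blast
    then have "(1 + \<i>) gdvd W\<^sup>2" using assms(6) gdvd_mult_unit_iff [OF assms(3)] by simp
    then show False using in_OI_not_gdvd in_OI_power [OF assms(4)] by blast
  qed
  then obtain s where s: "gunit s" "in_OI (s * P0)"
    using in_OI_associate_exists u0(2) by blast
  have "s ^ 4 = 1" using s(1) by (cases rule: gunit_cases) (simp_all add: power4_eq_xxxx)
  then have "A = (u0 * s\<^sup>2) * (s * P0)\<^sup>2"
    unfolding u0(3) by (simp add: algebra_simps power2_eq_square power4_eq_xxxx)
  moreover have "gunit (u0 * s\<^sup>2)" using u0(1) s(1) gunit_mult by (simp add: power2_eq_square)
  ultimately show thesis using that s(2) by blast
qed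

lemma gcoprime_mult_eq_unit_OI_square_factors:
  assumes "gauss A" "gauss B" "gunit c" "in_OI W" "gcoprime A B" "A * B = c * W\<^sup>2"
  obtains u v P Q where "gunit u" "gunit v" "u * v = c"
    "in_OI P" "in_OI Q" "A = u * P\<^sup>2" "B = v * Q\<^sup>2" "W = P * Q"
proof -
  obtain u P where uP: "gunit u" "in_OI P" "A = u * P\<^sup>2"
    using gcoprime_mult_eq_unit_OI_square assms by blast
  have "gcoprime B A" "B * A = c * W\<^sup>2"
    using assms(5,6) gcoprime_commute by (simp_all add: mult.commute)
  then obtain v Q where vQ: "gunit v" "in_OI Q" "B = v * Q\<^sup>2"
    using gcoprime_mult_eq_unit_OI_square [OF assms(2,1,3,4)] by blast
  define r where "r = u * v / c"
  have c0: "c \<noteq> 0" using gunit_nonzero assms(3) by blast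
  have r: "gunit r"
    unfolding r_def using gunit_mult [OF gunit_mult [OF uP(1) vQ(1)] gunit_inverse [OF assms(3)]]
    by simp
  have "r * (P * Q)\<^sup>2 = (u * P\<^sup>2) * (v * Q\<^sup>2) / c"
    unfolding r_def by (simp add: power_mult_distrib)
  also have "\<dots> = W\<^sup>2" using assms(6) c0 unfolding uP(3) [symmetric] vQ(3) [symmetric] by simp
  finally have "r * (P * Q)\<^sup>2 = W\<^sup>2" .
  moreover have "in_OI ((P * Q)\<^sup>2)" "in_OI (W\<^sup>2)"
    using in_OI_power in_OI_mult uP(2) vQ(2) assms(4) by blast+
  ultimately have "r = 1" using in_OI_gunit_mult_eq_1 [of "(P * Q)\<^sup>2" r] r by simp
  then have "u * v = c" and "(P * Q)\<^sup>2 = W\<^sup>2"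
    using c0 \<open>r * (P * Q)\<^sup>2 = W\<^sup>2\<close> unfolding r_def by simp_all
  then have "P * Q = W \<or> P * Q = - W" by (simp_all add: power2_eq_iff)
  then have "W = P * Q" using in_OI_uminus [OF assms(4)] in_OI_mult [OF uP(2) vQ(2)] by auto
  then show thesis using that uP vQ \<open>u * v = c\<close> by blast
qed

section \<open>Factoring \<open>X \<plusminus> \<i> Y\<close>\<close>

lemma in_OI_conj_factors:
  assumes "in_OI X" "in_OI Y"
  obtains A B where "gauss A" "X + \<i> * Y = (1 + \<i>) * A" "\<not> (1 + \<i>) gdvd A"
    "gauss B" "X - \<i> * Y = (1 + \<i>) * B"
proof -
  obtain k1 m1 k2 m2 where X: "X = Complex (of_int (4 * k1 + 1)) (of_int (2 * m1))"
    and Y: "Y = Complex (of_int (4 * k2 + 1)) (of_int (2 * m2))"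
    using assms in_OI_iff by meson
  define A where
    "A = Complex (of_int (2 * k1 + 2 * k2 + m1 - m2 + 1)) (of_int (m1 + m2 + 2 * k2 - 2 * k1))"
  define B where
    "B = Complex (of_int (2 * k1 - 2 * k2 + m1 + m2)) (of_int (m1 - m2 - 2 * k2 - 2 * k1 - 1))"
  have "X + \<i> * Y = (1 + \<i>) * A" "X - \<i> * Y = (1 + \<i>) * B"
    unfolding X Y A_def B_def by (simp_all add: complex_eq_iff algebra_simps)
  moreover have "\<not> (1 + \<i>) gdvd A"
    unfolding A_def one_plus_i_gdvd_iff by presburger
  moreover have "gauss A" "gauss B" unfolding A_def B_def by (rule gauss_Complex_of_int)+
  ultimately show thesis using that by blast
qed

lemma sum_squares_conj_factors:
  fixes X Y A B W c :: complex
  assumes "X + \<i> * Y = (1 + \<i>) * A" "X - \<i> * Y = (1 + \<i>) * B"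
    and "X\<^sup>2 + Y\<^sup>2 = c * ((1 + \<i>) * W)\<^sup>2"
  shows "A * B = c * W\<^sup>2"
proof -
  have "(1 + \<i>)\<^sup>2 * (A * B) = (X + \<i> * Y) * (X - \<i> * Y)"
    unfolding assms(1,2) by (simp add: algebra_simps power2_eq_square)
  also have "\<dots> = (1 + \<i>)\<^sup>2 * (c * W\<^sup>2)"
    using assms(3) by (simp add: algebra_simps power2_eq_square)
  moreover have "(1 + \<i>)\<^sup>2 \<noteq> 0" by (simp add: complex_eq_iff power2_eq_square)
  ultimately show ?thesis by simp
qed

lemma gcoprime_conj_factors:
  assumes "gauss X" "gauss Y" "gauss Z" "gunit c" "X\<^sup>2 + Y\<^sup>2 = c * Z\<^sup>2"
    and gcd: "\<forall>d. gauss d \<longrightarrow> d gdvd X \<longrightarrow> d gdvd Y \<longrightarrow> d gdvd Z \<longrightarrow> gunit d"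
    and A: "gauss A" "X + \<i> * Y = (1 + \<i>) * A" "\<not> (1 + \<i>) gdvd A"
    and B: "gauss B" "X - \<i> * Y = (1 + \<i>) * B"
  shows "gcoprime A B"
  unfolding gcoprime_def
proof (intro allI impI notI)
  fix p assume p: "gprime p" and pAB: "p gdvd A \<and> p gdvd B"
  have "(1 + \<i>) * (A + B) = (1 + \<i>) * ((1 + \<i>) * (- \<i> * X))"
    "(1 + \<i>) * (A - B) = (1 + \<i>) * ((1 + \<i>) * Y)"
    using A(2) B(2) by (simp_all add: algebra_simps)
  then have sum: "A + B = (1 + \<i>) * (- \<i> * X)" and diff: "A - B = (1 + \<i>) * Y"
    by (simp_all add: complex_eq_iff)
  have "p gdvd (1 + \<i>) * (- \<i> * X)" "p gdvd (1 + \<i>) * Y"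
    unfolding sum [symmetric] diff [symmetric] using pAB gdvd_add gdvd_diff by blast+
  moreover have "gauss (- \<i> * X)" using assms(1) by blast
  ultimately have "p gdvd - \<i> * X" "p gdvd Y"
    using gprime_gdvd_one_plus_i_mult_cancel [OF p _ _ conjunct1 [OF pAB] A(3)] assms(2) by blast+
  then have pX: "p gdvd X" and pY: "p gdvd Y"
    using gdvd_mult_unit_iff [of "- \<i>"] by (auto simp: gunit_def)
  then have "p gdvd X * X + Y * Y" using assms(1,2) gdvd_add gdvd_mult2 by blast
  then have "p gdvd Z\<^sup>2"
    using assms(5) gdvd_mult_unit_iff [OF assms(4)] by (simp add: power2_eq_square)
  then have "p gdvd Z" using gprime_gdvd_power2 p assms(3) by blast
  then show False using gcd pX pY p gprime_gauss gprime_not_gunit by blast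
qed

lemma conj_factors_formula:
  fixes X Y A B P Q c :: complex
  assumes "X + \<i> * Y = (1 + \<i>) * A" "X - \<i> * Y = (1 + \<i>) * B"
    and "A = \<i> ^ t * P\<^sup>2" "B = c * \<i> ^ (t + 1) * Q\<^sup>2"
  shows "X = \<i> ^ (t + 1) * ((P\<^sup>2 + c * \<i> * Q\<^sup>2) / (1 + \<i>))"
    and "Y = \<i> ^ t * ((P\<^sup>2 - c * \<i> * Q\<^sup>2) / (1 + \<i>))"
proof -
  have X: "X = (1 + \<i>) * (A + B) / 2" and Y: "Y = (1 + \<i>) * (A - B) / (2 * \<i>)"
    using assms(1,2) by (simp_all add: field_simps)
  have "1 + \<i> \<noteq> 0" "(1 + \<i>) * (1 + \<i>) = 2 * \<i>" by (simp_all add: complex_eq_iff)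
  then have h1: "\<i> / (1 + \<i>) = (1 + \<i>) / 2" and h2: "1 / (1 + \<i>) = (1 + \<i>) / (2 * \<i>)"
    by (simp_all add: divide_simps mult.assoc) (simp add: complex_eq_iff)
  have "\<i> ^ (t + 1) * ((P\<^sup>2 + c * \<i> * Q\<^sup>2) / (1 + \<i>))
      = \<i> ^ t * (\<i> / (1 + \<i>)) * (P\<^sup>2 + c * \<i> * Q\<^sup>2)" by (simp add: field_simps)
  also have "\<dots> = X" unfolding h1 X assms(3,4) by (simp add: field_simps)
  finally show "X = \<i> ^ (t + 1) * ((P\<^sup>2 + c * \<i> * Q\<^sup>2) / (1 + \<i>))" ..
  have "\<i> ^ t * ((P\<^sup>2 - c * \<i> * Q\<^sup>2) / (1 + \<i>))
      = \<i> ^ t * (1 / (1 + \<i>)) * (P\<^sup>2 - c * \<i> * Q\<^sup>2)" by (simp add: field_simps)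
  also have "\<dots> = Y" unfolding h2 Y assms(3,4) by (simp add: field_simps)
  finally show "Y = \<i> ^ t * ((P\<^sup>2 - c * \<i> * Q\<^sup>2) / (1 + \<i>))" ..
qed

lemma power_imaginary_unit_mult_eq:
  fixes v c :: complex
  assumes "\<i> ^ t * v = c * \<i>"
  shows "v = c * (-1) ^ t * \<i> ^ (t + 1)"
proof -
  have "(-1) ^ t * \<i> ^ t * \<i> ^ t = (1 :: complex)"
    by (simp add: power_mult_distrib [symmetric])
  then have "v = (-1) ^ t * \<i> ^ t * (\<i> ^ t * v)" by (simp add: ac_simps)
  then show ?thesis unfolding assms by (simp add: ac_simps)
qed

theorem theorem4p10:
  fixes \<epsilon> :: int and X Y Z W :: complex
  assumes "\<epsilon> \<in> {1, -1}"
    and "gauss X" and "gauss Y" and "gauss Z"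
    and "X\<^sup>2 + Y\<^sup>2 = of_int \<epsilon> * \<i> * Z\<^sup>2"
    and "\<forall>d. gauss d \<longrightarrow> d gdvd X \<longrightarrow> d gdvd Y \<longrightarrow> d gdvd Z \<longrightarrow> gunit d"
    and "X * Y * Z \<noteq> 0"
    and "in_OI X" and "in_OI Y"
    and "Z = (1 + \<i>) * W" and "in_OI W"
  shows "\<exists>(t::nat) P Q. t \<le> 3 \<and> in_G P \<and> in_G Q \<and>
           \<not> (1 + \<i>) gdvd P \<and> \<not> (1 + \<i>) gdvd Q \<and>
           (\<forall>p. gprime p \<longrightarrow> \<not> (p gdvd P \<and> p gdvd Q)) \<and>
           X = \<i> ^ (t + 1) * ((P\<^sup>2 + of_int \<epsilon> * (-1) ^ t * \<i> * Q\<^sup>2) / (1 + \<i>)) \<and>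
           Y = \<i> ^ t * ((P\<^sup>2 - of_int \<epsilon> * (-1) ^ t * \<i> * Q\<^sup>2) / (1 + \<i>)) \<and>
           Z = (1 + \<i>) * P * Q"
proof -
  have unit: "gunit (of_int \<epsilon> * \<i>)" using assms(1) by (auto simp: gunit_def)
  obtain A B where A: "gauss A" "X + \<i> * Y = (1 + \<i>) * A" "\<not> (1 + \<i>) gdvd A"
    and B: "gauss B" "X - \<i> * Y = (1 + \<i>) * B"
    by (rule in_OI_conj_factors [OF assms(8,9)])
  have "X\<^sup>2 + Y\<^sup>2 = of_int \<epsilon> * \<i> * ((1 + \<i>) * W)\<^sup>2" using assms(5,10) by simp
  then have AB: "A * B = of_int \<epsilon> * \<i> * W\<^sup>2" by (rule sum_squares_conj_factors [OF A(2) B(2)])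
  have coprime: "gcoprime A B" by (rule gcoprime_conj_factors [OF assms(2-4) unit assms(5,6) A B])
  obtain u v P Q where uv: "gunit u" "gunit v" "u * v = of_int \<epsilon> * \<i>"
    and PQ: "in_OI P" "in_OI Q" "A = u * P\<^sup>2" "B = v * Q\<^sup>2" "W = P * Q"
    by (rule gcoprime_mult_eq_unit_OI_square_factors [OF A(1) B(1) unit assms(11) coprime AB])
  obtain t where t: "t \<le> 3" "u = \<i> ^ t" using gunit_eq_power_imaginary_unit uv(1) by blast
  then have "A = \<i> ^ t * P\<^sup>2" "B = of_int \<epsilon> * (-1) ^ t * \<i> ^ (t + 1) * Q\<^sup>2"
    using power_imaginary_unit_mult_eq uv(3) PQ(3,4) by simp_all
  note XY = conj_factors_formula [OF A(2) B(2) this]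
  have "P gdvd A" "Q gdvd B"
    unfolding PQ(3,4) using gdvd_mult_power2 gunit_gauss in_OI_gauss uv(1,2) PQ(1,2) by blast+
  then have "gcoprime P Q" using gcoprime_gdvd_mono coprime by blast
  moreover have "Z = (1 + \<i>) * P * Q" using assms(10) PQ(5) by (simp add: mult.assoc)
  ultimately show ?thesis
    using t(1) PQ(1,2) XY in_OI_imp_in_G in_OI_not_gdvd unfolding gcoprime_def by blast
qed

end
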